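(* Let $A$ be a C*-algebra and $D$ a modular maximal right ideal of $A$. Regard $A$ as a right Hilbert $A$-module with $\langle a,b\rangle=a^*b$ and $D\subseteq A$ as a Hilbert $A$-submodule. Then every bounded $A$-linear map $r:D^{\perp\perp}\to A$ which vanishes on $D$ is the zero map, where $D^{\perp\perp}$ is the biorthogonal complement of $D$ in $A$.
   Context: A right ideal $D$ of $A$ is modular if there exists $u\in A$ with $a-ua\in D$ for all $a\in A$; it is maximal if it is a proper right ideal not contained in any larger proper right ideal. For $S\subseteq A$, $S^\perp=\{b\in A: s^*b=0\ \forall s\in S\}$ and $S^{\perp\perp}=(S^\perp)^\perp$. *)

theory Defs
  imports "HOL-Analysis.Analysis"
begin

text \<open>A (not necessarily unital) C*-algebra, on a real Banach algebra type 'a, with an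
  explicit complex scalar multiplication sc (compatible with the real one) and an
  involution st.\<close>

locale cstar_algebra =
  fixes sc :: "complex \<Rightarrow> 'a::{banach, real_normed_algebra} \<Rightarrow> 'a"
    and st :: "'a \<Rightarrow> 'a"
  assumes sc_of_real: "\<And>r x. sc (complex_of_real r) x = r *\<^sub>R x"
    and sc_add_right: "\<And>c x y. sc c (x + y) = sc c x + sc c y"
    and sc_add_left: "\<And>c d x. sc (c + d) x = sc c x + sc d x"
    and sc_mult: "\<And>c d x. sc (c * d) x = sc c (sc d x)"
    and sc_one: "\<And>x. sc 1 x = x"
    and sc_norm: "\<And>c x. norm (sc c x) = cmod c * norm x"
    and sc_mult_left: "\<And>c x y. sc c (x * y) = sc c x * y"
    and sc_mult_right: "\<And>c x y. sc c (x * y) = x * sc c y"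
    and st_st: "\<And>x. st (st x) = x"
    and st_add: "\<And>x y. st (x + y) = st x + st y"
    and st_sc: "\<And>c x. st (sc c x) = sc (cnj c) (st x)"
    and st_mult: "\<And>x y. st (x * y) = st y * st x"
    and cstar_id: "\<And>x. norm (st x * x) = (norm x)\<^sup>2"

definition right_ideal :: "(complex \<Rightarrow> 'a \<Rightarrow> 'a) \<Rightarrow> ('a::{banach, real_normed_algebra}) set \<Rightarrow> bool" where
  "right_ideal sc D \<longleftrightarrow> 0 \<in> D \<and> (\<forall>x\<in>D. \<forall>y\<in>D. x + y \<in> D) \<and> (\<forall>c. \<forall>x\<in>D. sc c x \<in> D)
     \<and> (\<forall>x\<in>D. \<forall>a. x * a \<in> D)"

definition modular_right_ideal :: "(complex \<Rightarrow> 'a \<Rightarrow> 'a) \<Rightarrow> ('a::{banach, real_normed_algebra}) set \<Rightarrow> bool" where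
  "modular_right_ideal sc D \<longleftrightarrow> right_ideal sc D \<and> (\<exists>u. \<forall>a. a - u * a \<in> D)"

definition maximal_right_ideal :: "(complex \<Rightarrow> 'a \<Rightarrow> 'a) \<Rightarrow> ('a::{banach, real_normed_algebra}) set \<Rightarrow> bool" where
  "maximal_right_ideal sc D \<longleftrightarrow> right_ideal sc D \<and> D \<noteq> UNIV \<and>
     (\<forall>E. right_ideal sc E \<and> E \<noteq> UNIV \<and> D \<subseteq> E \<longrightarrow> E = D)"

text \<open>Orthogonal complement in the Hilbert module A_A with inner product a* b.\<close>
definition orth :: "('a \<Rightarrow> 'a) \<Rightarrow> ('a::{banach, real_normed_algebra}) set \<Rightarrow> 'a set" where
  "orth st S = {b. \<forall>s\<in>S. st s * b = 0}"

definition bounded_module_map ::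
  "(complex \<Rightarrow> 'a \<Rightarrow> 'a) \<Rightarrow> ('a::{banach, real_normed_algebra}) set \<Rightarrow> ('a \<Rightarrow> 'a) \<Rightarrow> bool" where
  "bounded_module_map sc M r \<longleftrightarrow>
     (\<forall>x\<in>M. \<forall>y\<in>M. r (x + y) = r x + r y) \<and>
     (\<forall>c. \<forall>x\<in>M. r (sc c x) = sc c (r x)) \<and>
     (\<forall>x\<in>M. \<forall>a. r (x * a) = r x * a) \<and>
     (\<exists>K. \<forall>x\<in>M. norm (r x) \<le> K * norm x)"

end

theory Submission
  imports Defs
begin

text \<open>Since \<open>D \<subseteq> D\<^sup>\<perp>\<^sup>\<perp>\<close> and \<open>D\<^sup>\<perp>\<^sup>\<perp>\<close> is again a right ideal, maximality leaves two cases.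
  If \<open>D\<^sup>\<perp>\<^sup>\<perp> = D\<close> there is nothing to prove. If \<open>D\<^sup>\<perp>\<^sup>\<perp> = A\<close>, then every \<open>b \<in> D\<^sup>\<perp>\<close> satisfies
  \<open>b\<^sup>*b = 0\<close>, so \<open>D\<^sup>\<perp> = 0\<close>; a module map \<open>r\<close> on \<open>A\<close> vanishing on \<open>D\<close> is left multiplication
  by \<open>r u\<close> for a modular unit \<open>u\<close>, hence \<open>r(u)\<^sup>* \<in> D\<^sup>\<perp> = 0\<close> and \<open>r = 0\<close>.\<close>

context cstar_algebra
begin

lemma st_zero [simp]: "st 0 = 0"
  using st_add[of 0 0] by simp

lemma sc_zero [simp]: "sc c 0 = 0"
  using sc_norm[of c 0] by simp

lemma st_eq_zero_iff [simp]: "st x = 0 \<longleftrightarrow> x = 0"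
  using st_st[of x] by auto

lemma st_mult_self_eq_zero_iff: "st x * x = 0 \<longleftrightarrow> x = 0"
  using cstar_id[of x] by auto

lemma right_ideal_orth: "right_ideal sc (orth st S)"
  unfolding right_ideal_def orth_def
  by (auto simp: distrib_left sc_mult_right[symmetric] mult.assoc[symmetric])

lemma subset_orth_orth: "S \<subseteq> orth st (orth st S)"
proof
  fix s assume s: "s \<in> S"
  have "st b * s = 0" if "b \<in> orth st S" for b
  proof -
    have "st s * b = 0" using that s unfolding orth_def by blast
    then have "st (st s * b) = 0" by simp
    then show ?thesis by (simp add: st_mult st_st)
  qed
  then show "s \<in> orth st (orth st S)" unfolding orth_def by blast
qed

lemma orth_Int_orth_orth: "orth st S \<inter> orth st (orth st S) = {0}"
  by (auto simp: orth_def st_mult_self_eq_zero_iff)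

lemma orth_orth_cases_if_maximal:
  assumes "maximal_right_ideal sc D"
  shows "orth st (orth st D) = D \<or> orth st (orth st D) = UNIV"
  using assms right_ideal_orth subset_orth_orth
  unfolding maximal_right_ideal_def by blast

end

lemma module_map_eq_left_mult_modular_unit:
  fixes r :: "'a::{banach, real_normed_algebra} \<Rightarrow> 'a"
  assumes unit: "\<And>a. a - u * a \<in> D"
    and add: "\<And>x y. r (x + y) = r x + r y"
    and mult: "\<And>x a. r (x * a) = r x * a"
    and vanish: "\<forall>x\<in>D. r x = 0"
  shows "r a = r u * a"
proof -
  have "r a = r (u * a + (a - u * a))" by simp
  also have "\<dots> = r (u * a) + r (a - u * a)" by (rule add)
  also have "\<dots> = r u * a" using mult[of u a] unit[of a] vanish by simp
  finally show ?thesis .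
qed

lemma (in cstar_algebra) left_mult_zero_if_orth_trivial:
  assumes orth_trivial: "orth st D = {0}"
    and vanish: "\<forall>d\<in>D. c * d = 0"
  shows "c = 0"
proof -
  have "st d * st c = 0" if "d \<in> D" for d
    using vanish that st_mult[of c d] by (metis st_zero)
  then have "st c \<in> orth st D" unfolding orth_def by blast
  then show ?thesis using orth_trivial by simp
qed

theorem theorem5p1:
  fixes sc :: "complex \<Rightarrow> 'a::{banach, real_normed_algebra} \<Rightarrow> 'a"
    and st :: "'a \<Rightarrow> 'a"
    and D :: "'a set"
    and r :: "'a \<Rightarrow> 'a"
  assumes "cstar_algebra sc st"
    and "modular_right_ideal sc D"
    and "maximal_right_ideal sc D"
    and "bounded_module_map sc (orth st (orth st D)) r"
    and "\<forall>x\<in>D. r x = 0"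
  shows "\<forall>x\<in>orth st (orth st D). r x = 0"
proof -
  interpret cstar_algebra sc st by fact
  consider "orth st (orth st D) = D" | "orth st (orth st D) = UNIV"
    using orth_orth_cases_if_maximal[OF assms(3)] by blast
  then show ?thesis
  proof cases
    case 1
    then show ?thesis using assms(5) by simp
  next
    case 2
    obtain u where u: "\<And>a. a - u * a \<in> D"
      using assms(2) unfolding modular_right_ideal_def by blast
    have add: "\<And>x y. r (x + y) = r x + r y" and mult: "\<And>x a. r (x * a) = r x * a"
      using assms(4) 2 unfolding bounded_module_map_def by auto
    have r_eq: "r a = r u * a" for a
      using module_map_eq_left_mult_modular_unit[OF u add mult assms(5)] .
    have "orth st D = {0}"
      using orth_Int_orth_orth[of D] 2 by simp
    moreover have "\<forall>d\<in>D. r u * d = 0"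
      using r_eq assms(5) by metis
    ultimately have "r u = 0"
      by (rule left_mult_zero_if_orth_trivial)
    then show ?thesis using r_eq by (metis mult_zero_left)
  qed
qed

end
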